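(* Let $(V,\|\cdot\|)$ be a normed plane. For every $x\in S$, the inner bisector $\mathrm{bis_I}(-x,x)$ is a curve homeomorphic to a closed (compact) interval.
   Context: A normed (Minkowski) plane $(V,\|\cdot\|)$ is a two-dimensional real vector space with a norm; $B=\{v:\|v\|\le1\}$ is its unit ball and $S=\{v:\|v\|=1\}$ its unit circle. For distinct $x,y$, $\mathrm{bis}(x,y)=\{z\in V:\|z-x\|=\|z-y\|\}$. For $x\in S$, the inner bisector is $\mathrm{bis_I}(-x,x)=\mathrm{bis}(-x,x)\cap B$. *)

theory Defs
  imports "HOL-Analysis.Analysis"
begin

text \<open>A norm on the real plane, given as a function (Minkowski norm);
  the type real^2 carries its standard topology, which agrees with the
  topology of any norm on a finite-dimensional space.\<close>
definition is_norm :: "(real^2 \<Rightarrow> real) \<Rightarrow> bool" where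
  "is_norm N \<longleftrightarrow>
     (\<forall>x. N x = 0 \<longleftrightarrow> x = 0) \<and>
     (\<forall>x y. N (x + y) \<le> N x + N y) \<and>
     (\<forall>c x. N (c *\<^sub>R x) = \<bar>c\<bar> * N x)"

definition unit_ball :: "(real^2 \<Rightarrow> real) \<Rightarrow> (real^2) set" where
  "unit_ball N = {v. N v \<le> 1}"

definition unit_circle :: "(real^2 \<Rightarrow> real) \<Rightarrow> (real^2) set" where
  "unit_circle N = {v. N v = 1}"

definition bis :: "(real^2 \<Rightarrow> real) \<Rightarrow> real^2 \<Rightarrow> real^2 \<Rightarrow> (real^2) set" where
  "bis N x y = {z. N (z - x) = N (z - y)}"

definition inner_bis :: "(real^2 \<Rightarrow> real) \<Rightarrow> real^2 \<Rightarrow> (real^2) set" where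
  "inner_bis N x = bis N (-x) x \<inter> unit_ball N"

end

theory Submission
  imports Defs
begin

text \<open>The linear functional \<open>wedge x\<close> (the determinant against \<open>x\<close>) is injective on the
  inner bisector \<open>K\<close>: if \<open>z\<close> and \<open>z + e x\<close> with \<open>e > 0\<close> both lay in \<open>K\<close>, the convex function
  \<open>g t = N (z + t x)\<close> would be at most 1 at \<open>0\<close> and \<open>e\<close> and take equal values at \<open>\<plusminus>1\<close> and at
  \<open>e \<plusminus> 1\<close>; convexity then forces \<open>g 1 + g (e + 1) \<le> 2\<close>, whereas the triangle inequality gives
  \<open>2 + e = N ((2 + e) x) \<le> g (e + 1) + g (-1)\<close>. Being continuous on the compact set \<open>K\<close>,
  \<open>wedge x\<close> is a homeomorphism onto its image. The image is a compact interval: it is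
  star-shaped about \<open>0\<close> because the line through \<open>l z\<close> parallel to \<open>x\<close> crosses \<open>K\<close>
  (intermediate value theorem) for \<open>z \<in> K\<close> and \<open>0 \<le> l \<le> 1\<close>, and it is not a single point
  because the same holds for lines through the ball \<open>N c \<le> 1/2\<close>.\<close>

lemma is_norm_zero: "is_norm N \<Longrightarrow> N 0 = 0"
  by (simp add: is_norm_def)

lemma is_norm_eq_0_iff: "is_norm N \<Longrightarrow> N v = 0 \<longleftrightarrow> v = 0"
  by (simp add: is_norm_def)

lemma is_norm_triangle: "is_norm N \<Longrightarrow> N (u + v) \<le> N u + N v"
  by (simp add: is_norm_def)

lemma is_norm_scaleR: "is_norm N \<Longrightarrow> N (c *\<^sub>R v) = \<bar>c\<bar> * N v"
  by (simp add: is_norm_def)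

lemma is_norm_minus: "is_norm N \<Longrightarrow> N (- v) = N v"
  using is_norm_scaleR[of N "-1" v] by simp

lemma is_norm_triangle_diff: "is_norm N \<Longrightarrow> N (u - v) \<le> N u + N v"
  using is_norm_triangle[of N u "- v"] is_norm_minus[of N v] by simp

lemma is_norm_reverse_triangle: "is_norm N \<Longrightarrow> N u - N v \<le> N (u - v)"
  using is_norm_triangle[of N "u - v" v] by simp

lemma is_norm_nonneg: "is_norm N \<Longrightarrow> 0 \<le> N v"
  using is_norm_triangle_diff[of N v v] is_norm_zero[of N] by simp

lemma is_norm_convex_on: "is_norm N \<Longrightarrow> convex_on UNIV N"
proof (rule convex_onI)
  fix t :: real and u v assume N: "is_norm N" and t: "0 < t" "t < 1"
  have "N ((1 - t) *\<^sub>R u + t *\<^sub>R v) \<le> N ((1 - t) *\<^sub>R u) + N (t *\<^sub>R v)"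
    using is_norm_triangle[OF N] .
  also have "\<dots> = (1 - t) * N u + t * N v"
    using t by (simp add: is_norm_scaleR[OF N])
  finally show "N ((1 - t) *\<^sub>R u + t *\<^sub>R v) \<le> (1 - t) * N u + t * N v" .
qed simp

lemma is_norm_continuous_on: "is_norm N \<Longrightarrow> continuous_on S N"
  using convex_on_continuous[OF open_UNIV is_norm_convex_on] continuous_on_subset by blast

lemma is_norm_ge_scaled_norm:
  assumes N: "is_norm N"
  shows "\<exists>m>0. \<forall>v. m * norm v \<le> N v"
proof -
  have "\<exists>u\<in>sphere (0::real^2) 1. \<forall>v\<in>sphere 0 1. N u \<le> N v"
    by (rule continuous_attains_inf) (simp_all add: is_norm_continuous_on[OF N])
  then obtain u :: "real^2" where u: "norm u = 1" and min: "\<And>v. norm v = 1 \<Longrightarrow> N u \<le> N v"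
    by auto
  have "0 < N u"
    using u is_norm_eq_0_iff[OF N, of u] is_norm_nonneg[OF N, of u] by auto
  moreover have "N u * norm v \<le> N v" for v
  proof (cases "v = 0")
    case False
    have "N u \<le> N ((1 / norm v) *\<^sub>R v)"
      using min False by simp
    then show ?thesis
      using False by (simp add: is_norm_scaleR[OF N] field_simps)
  qed (simp add: is_norm_zero[OF N])
  ultimately show ?thesis by blast
qed

lemma compact_unit_ball:
  assumes N: "is_norm N"
  shows "compact (unit_ball N)"
proof -
  obtain m where m: "m > 0" "\<And>v. m * norm v \<le> N v"
    using is_norm_ge_scaled_norm[OF N] by blast
  have "unit_ball N \<subseteq> cball 0 (1 / m)"
  proof
    fix v assume "v \<in> unit_ball N"
    then have "m * norm v \<le> 1"
      using m(2)[of v] by (simp add: unit_ball_def)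
    then show "v \<in> cball 0 (1 / m)"
      using m(1) by (simp add: pos_le_divide_eq mult.commute)
  qed
  then have "bounded (unit_ball N)"
    by (rule bounded_subset[OF bounded_cball])
  moreover have "closed (unit_ball N)"
    unfolding unit_ball_def
    by (intro closed_Collect_le continuous_on_const is_norm_continuous_on[OF N])
  ultimately show ?thesis
    by (simp add: compact_eq_bounded_closed)
qed

lemma convex_on_line:
  fixes f :: "'a::real_vector \<Rightarrow> real"
  assumes "convex_on UNIV f"
  shows "convex_on UNIV (\<lambda>t. f (z + t *\<^sub>R v))"
proof (rule convex_onI)
  fix t a b :: real assume "0 < t" "t < 1"
  have "z + ((1 - t) * a + t * b) *\<^sub>R v = (1 - t) *\<^sub>R (z + a *\<^sub>R v) + t *\<^sub>R (z + b *\<^sub>R v)"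
    by (simp add: algebra_simps)
  then show "f (z + ((1 - t) *\<^sub>R a + t *\<^sub>R b) *\<^sub>R v) \<le> (1 - t) * f (z + a *\<^sub>R v) + t * f (z + b *\<^sub>R v)"
    using convex_onD[OF assms, of t] \<open>0 < t\<close> \<open>t < 1\<close> by simp
qed simp

lemma convex_on_shift_bisector_bound:
  fixes g :: "real \<Rightarrow> real"
  assumes g: "convex_on UNIV g" and e: "0 < e" and "g 0 \<le> 1" "g e \<le> 1"
    and "g (-1) = g 1" "g (e - 1) = g (e + 1)"
  shows "g 1 + g (e + 1) \<le> 2"
proof -
  have conv: "g ((1 - t) * a + t * b) \<le> (1 - t) * g a + t * g b" if "0 \<le> t" "t \<le> 1" for t a b
    using convex_onD[OF g that] by simp
  show ?thesis
  proof (cases "1 \<le> e")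
    case True
    have "g 1 \<le> (1 - 1 / e) * g 0 + 1 / e * g e"
      using conv[of "1 / e" 0 e] True e by simp
    also have "\<dots> \<le> (1 - 1 / e) * 1 + 1 / e * 1"
      using True e assms(3,4) by (intro add_mono mult_left_mono) auto
    finally have "g 1 \<le> 1" by simp
    have "g (e - 1) \<le> (1 - (e - 1) / e) * g 0 + (e - 1) / e * g e"
      using conv[of "(e - 1) / e" 0 e] True e by simp
    also have "\<dots> \<le> (1 - (e - 1) / e) * 1 + (e - 1) / e * 1"
      using True e assms(3,4) by (intro add_mono mult_left_mono) auto
    finally show ?thesis
      using \<open>g 1 \<le> 1\<close> assms(6) by simp
  next
    case False
    have Q: "g (e + 1) \<le> (1 - e) * g 1 + e * g 0"
      using conv[of e "-1" 0] False e assms(5,6) by simp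
    have P: "g 1 \<le> e * g e + (1 - e) * g (e + 1)"
      using conv[of "1 - e" e "e + 1"] False e by (simp add: algebra_simps)
    have "e * (g 1 + g (e + 1)) \<le> e * (g 0 + g e)"
      using P Q by (simp add: algebra_simps)
    then have "g 1 + g (e + 1) \<le> g 0 + g e"
      using e by simp
    then show ?thesis
      using assms(3,4) by simp
  qed
qed

definition wedge :: "real^2 \<Rightarrow> real^2 \<Rightarrow> real" where
  "wedge u v = u$1 * v$2 - u$2 * v$1"

lemma linear_wedge: "linear (wedge u)"
  by (rule linearI) (simp_all add: wedge_def algebra_simps)

lemma continuous_on_wedge: "continuous_on S (wedge u)"
  unfolding wedge_def by (intro continuous_intros)

lemma wedge_self: "wedge u u = 0"
  by (simp add: wedge_def)

lemma wedge_eq_0_imp_parallel: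
  assumes "wedge u v = 0" "u \<noteq> 0"
  shows "\<exists>\<mu>. v = \<mu> *\<^sub>R u"
proof (cases "u$1 = 0")
  case True
  then have "u$2 \<noteq> 0"
    using assms(2) by (auto simp: vec_eq_iff forall_2)
  then have "v = (v$2 / u$2) *\<^sub>R u"
    using assms(1) True by (auto simp: vec_eq_iff forall_2 wedge_def field_simps)
  then show ?thesis by blast
next
  case False
  then have "v = (v$1 / u$1) *\<^sub>R u"
    using assms(1) by (auto simp: vec_eq_iff forall_2 wedge_def field_simps)
  then show ?thesis by blast
qed

lemma wedge_nonzero_exists:
  assumes "u \<noteq> 0"
  shows "\<exists>v. wedge u v \<noteq> 0"
proof -
  have "wedge u (\<chi> i. if i = 1 then - u$2 else u$1) = (u$1)\<^sup>2 + (u$2)\<^sup>2"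
    by (simp add: wedge_def power2_eq_square)
  moreover have "(u$1)\<^sup>2 + (u$2)\<^sup>2 \<noteq> 0"
    using assms by (auto simp: vec_eq_iff forall_2)
  ultimately show ?thesis by metis
qed

locale norm_unit_vector =
  fixes N :: "real^2 \<Rightarrow> real" and x :: "real^2"
  assumes norm: "is_norm N" and unit: "N x = 1"
begin

lemma mem_inner_bis: "z \<in> inner_bis N x \<longleftrightarrow> N (z + x) = N (z - x) \<and> N z \<le> 1"
  by (simp add: inner_bis_def bis_def unit_ball_def)

lemma x_nonzero: "x \<noteq> 0"
  using unit is_norm_zero[OF norm] by auto

lemma zero_mem_inner_bis: "0 \<in> inner_bis N x"
  using unit is_norm_minus[OF norm, of x] by (simp add: mem_inner_bis is_norm_zero[OF norm])

lemma compact_inner_bis: "compact (inner_bis N x)"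
proof -
  have cont: "continuous_on UNIV (\<lambda>z. N (z - y))" for y
    by (rule continuous_on_compose2[OF is_norm_continuous_on[OF norm]]) (auto intro!: continuous_intros)
  have "closed (bis N (- x) x)"
    unfolding bis_def by (intro closed_Collect_eq cont)
  then show ?thesis
    unfolding inner_bis_def by (rule closed_Int_compact[OF _ compact_unit_ball[OF norm]])
qed

lemma inner_bis_no_positive_translate:
  assumes z: "z \<in> inner_bis N x" and ze: "z + e *\<^sub>R x \<in> inner_bis N x" and e: "0 < e"
  shows False
proof -
  define g where "g t = N (z + t *\<^sub>R x)" for t
  have "g 1 + g (e + 1) \<le> 2"
  proof (rule convex_on_shift_bisector_bound[OF _ e])
    show "convex_on UNIV g"
      unfolding g_def by (rule convex_on_line[OF is_norm_convex_on[OF norm]])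
    show "g (-1) = g 1" "g 0 \<le> 1"
      using z by (simp_all add: g_def mem_inner_bis)
    show "g e \<le> 1" "g (e - 1) = g (e + 1)"
      using ze by (simp_all add: g_def mem_inner_bis algebra_simps)
  qed
  moreover have "2 + e \<le> g (e + 1) + g (-1)"
  proof -
    have "(z + (e + 1) *\<^sub>R x) - (z + (-1) *\<^sub>R x) = (2 + e) *\<^sub>R x"
      by (simp add: vec_eq_iff algebra_simps)
    then show ?thesis
      using is_norm_triangle_diff[OF norm, of "z + (e + 1) *\<^sub>R x" "z + (-1) *\<^sub>R x"] e
      by (simp add: g_def is_norm_scaleR[OF norm] unit)
  qed
  moreover have "g (-1) = g 1"
    using z by (simp add: g_def mem_inner_bis)
  ultimately show False
    using e by simp
qed

lemma inner_bis_translate_eq_0: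
  assumes "z \<in> inner_bis N x" "z + e *\<^sub>R x \<in> inner_bis N x"
  shows "e = 0"
proof (rule ccontr)
  assume "e \<noteq> 0"
  then consider "0 < e" | "0 < - e" by linarith
  then show False
  proof cases
    case 1
    then show False using inner_bis_no_positive_translate assms by blast
  next
    case 2
    have "(z + e *\<^sub>R x) + (- e) *\<^sub>R x = z" by simp
    then show False using inner_bis_no_positive_translate[OF assms(2) _ 2] assms(1) by simp
  qed
qed

lemma inj_on_wedge_inner_bis: "inj_on (wedge x) (inner_bis N x)"
proof (rule inj_onI)
  fix u v assume u: "u \<in> inner_bis N x" and v: "v \<in> inner_bis N x" and "wedge x u = wedge x v"
  then have "wedge x (u - v) = 0"
    by (simp add: linear_diff[OF linear_wedge])
  then obtain \<mu> where "u = v + \<mu> *\<^sub>R x"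
    using wedge_eq_0_imp_parallel[OF _ x_nonzero] by (metis add.commute diff_add_cancel)
  with u v have "\<mu> = 0"
    using inner_bis_translate_eq_0 by blast
  with \<open>u = v + \<mu> *\<^sub>R x\<close> show "u = v" by simp
qed

lemma mem_inner_bis_line:
  "c + t *\<^sub>R x \<in> inner_bis N x \<longleftrightarrow>
     N (c + (t + 1) *\<^sub>R x) = N (c + (t - 1) *\<^sub>R x) \<and> N (c + t *\<^sub>R x) \<le> 1"
  by (simp add: mem_inner_bis scaleR_add_left scaleR_diff_left add.assoc add_diff_eq)

lemma inner_bis_crossing:
  assumes s: "0 \<le> s"
    and ball: "N (c - s *\<^sub>R x) \<le> 1" "N (c + s *\<^sub>R x) \<le> 1"
    and sides: "N (c + (1 - s) *\<^sub>R x) \<le> N (c - (1 + s) *\<^sub>R x)"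
      "N (c + (s - 1) *\<^sub>R x) \<le> N (c + (s + 1) *\<^sub>R x)"
  shows "\<exists>t. c + t *\<^sub>R x \<in> inner_bis N x"
proof -
  define h where "h t = N (c + (t + 1) *\<^sub>R x) - N (c + (t - 1) *\<^sub>R x)" for t
  have "continuous_on {-s..s} h"
    unfolding h_def
    by (intro continuous_on_diff; rule continuous_on_compose2[OF is_norm_continuous_on[OF norm]])
      (auto intro!: continuous_intros)
  moreover have "h (-s) \<le> 0" "0 \<le> h s"
    using sides by (simp_all add: h_def algebra_simps)
  ultimately obtain t where t: "-s \<le> t" "t \<le> s" "h t = 0"
    using IVT'[of h "-s" 0 s] s by auto
  have "convex_on {-s..s} (\<lambda>t. N (c + t *\<^sub>R x))"
    using convex_on_line[OF is_norm_convex_on[OF norm]] by (rule convex_on_subset) auto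
  then have "N (c + t *\<^sub>R x) \<le> max (N (c + (-s) *\<^sub>R x)) (N (c + s *\<^sub>R x))"
    using t by (intro convex_on_le_max) auto
  with ball t show ?thesis
    by (auto simp: mem_inner_bis_line h_def)
qed

lemma scaled_wedge_mem_image:
  assumes z: "z \<in> inner_bis N x" and l: "0 \<le> l" "l \<le> 1"
  shows "l * wedge x z \<in> wedge x ` inner_bis N x"
proof -
  have Nz: "N z \<le> 1" and zx: "N (z + x) = N (z - x)"
    using z by (auto simp: mem_inner_bis)
  have ball: "N (l *\<^sub>R z + (1 - l) *\<^sub>R y) \<le> 1" if "N y = 1" for y
  proof -
    have "N (l *\<^sub>R z + (1 - l) *\<^sub>R y) \<le> l * N z + (1 - l) * N y"
      using convex_onD[OF is_norm_convex_on[OF norm], of "1 - l" z y] l by simp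
    also have "\<dots> \<le> l + (1 - l)"
      using Nz l that by (simp add: mult_left_le)
    finally show ?thesis by simp
  qed
  have side: "N (l *\<^sub>R z - l *\<^sub>R y) \<le> N (l *\<^sub>R z + (2 - l) *\<^sub>R y)" if "N (z + y) = N (z - y)" for y
  proof -
    have "l *\<^sub>R z + (2 - l) *\<^sub>R y = (z + y) - (1 - l) *\<^sub>R (z - y)"
      by (simp add: vec_eq_iff algebra_simps)
    then have "N (z + y) - (1 - l) * N (z - y) \<le> N (l *\<^sub>R z + (2 - l) *\<^sub>R y)"
      using is_norm_reverse_triangle[OF norm, of "z + y" "(1 - l) *\<^sub>R (z - y)"] l
      by (simp add: is_norm_scaleR[OF norm])
    moreover have "N (l *\<^sub>R z - l *\<^sub>R y) = l * N (z - y)"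
      using l is_norm_scaleR[OF norm, of l "z - y"] by (simp add: scaleR_diff_right)
    ultimately show ?thesis
      using that by (simp add: algebra_simps)
  qed
  have "\<exists>t. l *\<^sub>R z + t *\<^sub>R x \<in> inner_bis N x"
  proof (rule inner_bis_crossing)
    show "0 \<le> 1 - l"
      using l by simp
    show "N (l *\<^sub>R z - (1 - l) *\<^sub>R x) \<le> 1" "N (l *\<^sub>R z + (1 - l) *\<^sub>R x) \<le> 1"
      using ball[of "- x"] ball[of x] unit is_norm_minus[OF norm, of x] by simp_all
    show "N (l *\<^sub>R z + (1 - (1 - l)) *\<^sub>R x) \<le> N (l *\<^sub>R z - (1 + (1 - l)) *\<^sub>R x)"
      using side[of "- x"] zx by (simp add: algebra_simps)
    show "N (l *\<^sub>R z + (1 - l - 1) *\<^sub>R x) \<le> N (l *\<^sub>R z + (1 - l + 1) *\<^sub>R x)"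
      using side[of x] zx by (simp add: algebra_simps)
  qed
  then obtain t where "l *\<^sub>R z + t *\<^sub>R x \<in> inner_bis N x" ..
  moreover have "wedge x (l *\<^sub>R z + t *\<^sub>R x) = l * wedge x z"
    by (simp add: linear_add[OF linear_wedge] linear_scale[OF linear_wedge] wedge_self)
  ultimately show ?thesis
    by (metis image_eqI)
qed

lemma wedge_mem_image_if_small:
  assumes c: "N c \<le> 1 / 2"
  shows "wedge x c \<in> wedge x ` inner_bis N x"
proof -
  have near: "N (c + a *\<^sub>R x) \<le> N c + \<bar>a\<bar>" for a
    using is_norm_triangle[OF norm, of c "a *\<^sub>R x"] by (simp add: is_norm_scaleR[OF norm] unit)
  have far: "\<bar>a\<bar> - N c \<le> N (c + a *\<^sub>R x)" for a
    using is_norm_reverse_triangle[OF norm, of "a *\<^sub>R x" "- c"]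
    by (simp add: is_norm_scaleR[OF norm] is_norm_minus[OF norm] unit add.commute)
  have "\<exists>t. c + t *\<^sub>R x \<in> inner_bis N x"
  proof (rule inner_bis_crossing[of "1 / 2"])
    show "N (c - (1 / 2) *\<^sub>R x) \<le> 1" "N (c + (1 / 2) *\<^sub>R x) \<le> 1"
      using near[of "- (1 / 2)"] near[of "1 / 2"] c by simp_all
    show "N (c + (1 - 1 / 2) *\<^sub>R x) \<le> N (c - (1 + 1 / 2) *\<^sub>R x)"
      using near[of "1 / 2"] far[of "- (3 / 2)"] c by simp
    show "N (c + (1 / 2 - 1) *\<^sub>R x) \<le> N (c + (1 / 2 + 1) *\<^sub>R x)"
      using near[of "- (1 / 2)"] far[of "3 / 2"] c by simp
  qed simp
  then obtain t where "c + t *\<^sub>R x \<in> inner_bis N x" ..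
  moreover have "wedge x (c + t *\<^sub>R x) = wedge x c"
    by (simp add: linear_add[OF linear_wedge] linear_scale[OF linear_wedge] wedge_self)
  ultimately show ?thesis
    by (metis image_eqI)
qed

lemma starlike_wedge_image_inner_bis: "starlike (wedge x ` inner_bis N x)"
  unfolding starlike_def
proof (intro bexI ballI subsetI)
  show "0 \<in> wedge x ` inner_bis N x"
    using zero_mem_inner_bis linear_0[OF linear_wedge] by (metis image_eqI)
  fix y w assume y: "y \<in> wedge x ` inner_bis N x" and "w \<in> closed_segment 0 y"
  then obtain u where "0 \<le> u" "u \<le> 1" "w = u * y"
    by (auto simp: closed_segment_def)
  with y show "w \<in> wedge x ` inner_bis N x"
    using scaled_wedge_mem_image by blast
qed

lemma inner_bis_not_parallel: "\<exists>z\<in>inner_bis N x. wedge x z \<noteq> 0"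
proof -
  obtain v where v: "wedge x v \<noteq> 0"
    using wedge_nonzero_exists[OF x_nonzero] by blast
  then have "v \<noteq> 0"
    using linear_0[OF linear_wedge] by auto
  then have "0 < N v"
    using is_norm_eq_0_iff[OF norm, of v] is_norm_nonneg[OF norm, of v] by simp
  define c where "c = (1 / (2 * N v)) *\<^sub>R v"
  have "wedge x c \<in> wedge x ` inner_bis N x"
    using \<open>0 < N v\<close> by (intro wedge_mem_image_if_small) (simp add: c_def is_norm_scaleR[OF norm])
  moreover have "wedge x c \<noteq> 0"
    using v \<open>0 < N v\<close> by (simp add: c_def linear_scale[OF linear_wedge])
  ultimately show ?thesis
    by auto
qed

lemma wedge_image_inner_bis: "\<exists>a b. a < b \<and> wedge x ` inner_bis N x = {a..b}"
proof -
  let ?I = "wedge x ` inner_bis N x"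
  have "compact ?I"
    by (rule compact_continuous_image[OF continuous_on_wedge compact_inner_bis])
  moreover have "connected ?I"
    by (rule starlike_imp_connected[OF starlike_wedge_image_inner_bis])
  ultimately obtain a b where ab: "?I = {a..b}"
    by (meson connected_compact_interval_1)
  obtain z where "z \<in> inner_bis N x" "wedge x z \<noteq> 0"
    using inner_bis_not_parallel by blast
  then have "wedge x z \<in> {a..b}" "wedge x z \<noteq> 0"
    unfolding ab[symmetric] by auto
  moreover have "0 \<in> {a..b}"
    unfolding ab[symmetric] using zero_mem_inner_bis linear_0[OF linear_wedge] by (metis image_eqI)
  ultimately have "a < b"
    by (cases "wedge x z < 0") auto
  with ab show ?thesis by blast
qed

end

theorem proposition4p1:
  fixes N :: "real^2 \<Rightarrow> real" and x :: "real^2"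
  assumes "is_norm N" and "x \<in> unit_circle N"
  shows "inner_bis N x homeomorphic {0..(1::real)}"
proof -
  interpret norm_unit_vector N x
    using assms by unfold_locales (simp_all add: unit_circle_def)
  obtain a b where "a < b" and ab: "wedge x ` inner_bis N x = {a..b}"
    using wedge_image_inner_bis by blast
  have "inner_bis N x homeomorphic {a..b}"
    using compact_inner_bis continuous_on_wedge ab inj_on_wedge_inner_bis by (rule homeomorphic_compact)
  moreover have "{a..b} homeomorphic {0..(1::real)}"
    using \<open>a < b\<close> by (intro homeomorphic_closed_intervals_real) simp_all
  ultimately show ?thesis
    by (rule homeomorphic_trans)
qed

end
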